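(* Let $G$ be any strategic game with players $1,\dots,n$. For every belief model $(\Omega,\bar s_1,\dots,\bar s_n,P_1,\dots,P_n)$ for $G$, $$[\![\mathit{rat}_{gbr}]\!]\cap[\![\Box^*\mathit{rat}_{gbr}]\!]\subseteq[\![\nu X.\,O_{lsd}X]\!].$$
   Context: Strategic game $G=(T_1,\dots,T_n,<_1,\dots,<_n)$: arbitrary nonempty $T_i$, $<_i$ total linear order on $T=\prod_iT_i$, $\ge_i$ reflexive closure. Restriction: $S=(S_1,\dots,S_n)$, $S_i\subseteq T_i$. $\mathcal{L}_O$ and optimality models: first-order formulas over atoms $C(a)$, $a\ge^i_cb$ and constant $o$; in $(G,G',s)$ with assignment $\alpha$ ($o\mapsto s$): $C(x)$ iff $\alpha(x)_j\in G'_j$ for all $j$; $x\ge^i_zy$ iff $(\alpha(x)_i,\alpha(z)_{-i})\ge_i(\alpha(y)_i,\alpha(z)_{-i})$. $gbr_i:=\exists z(C(z)\wedge\forall y\;o\ge^i_zy)$; $lsd_i:=\forall y(C(y)\to\exists z(C(z)\wedge o\ge^i_zy))$. Belief model: $\Omega\ne\emptyset$, $\bar s_i:\Omega\to T_i$, $P_i:\Omega\to2^\Omega$, $\bar s(\omega)=(\bar s_i(\omega))_i$, $(G_E)_i=\{\bar s_i(u):u\in E\}$. Semantics: $[\![\mathit{rat}_{\phi_i}]\!]_E=\{\omega:(G,G_{P_i(\omega)},\bar s(\omega))\models\phi_i\}$, $[\![X]\!]_E=E$, $\wedge,\neg$ as intersection/complement, $[\![\Box_i\psi]\!]_E=\{\omega:P_i(\omega)\subseteq[\![\psi]\!]_E\}$,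 $[\![O_{\phi_i}\psi]\!]_E=\{\omega:(G,G_{[\![\psi]\!]_E},\bar s(\omega))\models\phi_i\}$, $[\![\nu X.\psi]\!]_E$ = outcome of the transfinite iteration of $F\mapsto[\![\psi]\!]_F\cap F$ starting from $\Omega$ (successor: apply the operator; limit: intersect; stop at the first repetition). $\mathit{rat}_\phi=\bigwedge_i\mathit{rat}_{\phi_i}$, $\Box\psi=\bigwedge_i\Box_i\psi$, $O_\phi\psi=\bigwedge_iO_{\phi_i}\psi$, $\Box^*\psi:=\nu X.\Box(X\wedge\psi)$. *)

theory Defs
  imports Main "HOL-Library.FuncSet"
begin

text \<open>Players are 0,...,n-1 (the paper's 1,...,n).  All strategies live in one type 'a;
 player i's strategy set is T i.  A strategy profile is an extensional function
 s :: nat => 'a with s j : T j for j < n, i.e. an element of PiE {..<n} T.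
 ge i a b means a >=_i b (reflexive closure of player i's strict total order on T).\<close>

definition profiles :: "nat \<Rightarrow> (nat \<Rightarrow> 'a set) \<Rightarrow> (nat \<Rightarrow> 'a) set" where
  "profiles n T = PiE {..<n} T"

definition strategic_game ::
  "nat \<Rightarrow> (nat \<Rightarrow> 'a set) \<Rightarrow> (nat \<Rightarrow> (nat \<Rightarrow> 'a) \<Rightarrow> (nat \<Rightarrow> 'a) \<Rightarrow> bool) \<Rightarrow> bool" where
  "strategic_game n T ge \<longleftrightarrow>
     (\<forall>i<n. T i \<noteq> {}) \<and>
     (\<forall>i<n.
        (\<forall>a\<in>profiles n T. ge i a a) \<and>
        (\<forall>a\<in>profiles n T. \<forall>b\<in>profiles n T. ge i a b \<and> ge i b a \<longrightarrow> a = b) \<and>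
        (\<forall>a\<in>profiles n T. \<forall>b\<in>profiles n T. \<forall>c\<in>profiles n T.
            ge i a b \<and> ge i b c \<longrightarrow> ge i a c) \<and>
        (\<forall>a\<in>profiles n T. \<forall>b\<in>profiles n T. ge i a b \<or> ge i b a))"

definition inC :: "nat \<Rightarrow> (nat \<Rightarrow> 'a set) \<Rightarrow> (nat \<Rightarrow> 'a) \<Rightarrow> bool" where
  "inC n S z \<longleftrightarrow> (\<forall>j<n. z j \<in> S j)"

text \<open>Optimality notions, evaluated in the optimality model (G, S, s) with o |-> s.
 Quantified variables range over the profiles T of G.
 x >=^i_z y is ge i (z(i := x i)) (z(i := y i)).\<close>

definition gbr :: "nat \<Rightarrow> (nat \<Rightarrow> 'a set) \<Rightarrow> (nat \<Rightarrow> (nat \<Rightarrow> 'a) \<Rightarrow> (nat \<Rightarrow> 'a) \<Rightarrow> bool)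
    \<Rightarrow> nat \<Rightarrow> (nat \<Rightarrow> 'a set) \<Rightarrow> (nat \<Rightarrow> 'a) \<Rightarrow> bool" where
  "gbr n T ge i S s \<longleftrightarrow>
     (\<exists>z\<in>profiles n T. inC n S z \<and>
        (\<forall>y\<in>profiles n T. ge i (z(i := s i)) (z(i := y i))))"

definition lsd :: "nat \<Rightarrow> (nat \<Rightarrow> 'a set) \<Rightarrow> (nat \<Rightarrow> (nat \<Rightarrow> 'a) \<Rightarrow> (nat \<Rightarrow> 'a) \<Rightarrow> bool)
    \<Rightarrow> nat \<Rightarrow> (nat \<Rightarrow> 'a set) \<Rightarrow> (nat \<Rightarrow> 'a) \<Rightarrow> bool" where
  "lsd n T ge i S s \<longleftrightarrow>
     (\<forall>y\<in>profiles n T. inC n S y \<longrightarrow>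
        (\<exists>z\<in>profiles n T. inC n S z \<and> ge i (z(i := s i)) (z(i := y i))))"

definition belief_model :: "nat \<Rightarrow> (nat \<Rightarrow> 'a set) \<Rightarrow> 'w set \<Rightarrow> (nat \<Rightarrow> 'w \<Rightarrow> 'a)
    \<Rightarrow> (nat \<Rightarrow> 'w \<Rightarrow> 'w set) \<Rightarrow> bool" where
  "belief_model n T Om sb P \<longleftrightarrow> Om \<noteq> {} \<and>
     (\<forall>i<n. \<forall>w\<in>Om. sb i w \<in> T i \<and> P i w \<subseteq> Om)"

definition sbar :: "nat \<Rightarrow> (nat \<Rightarrow> 'w \<Rightarrow> 'a) \<Rightarrow> 'w \<Rightarrow> (nat \<Rightarrow> 'a)" where
  "sbar n sb w = (\<lambda>j. if j < n then sb j w else undefined)"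

definition GE :: "(nat \<Rightarrow> 'w \<Rightarrow> 'a) \<Rightarrow> 'w set \<Rightarrow> nat \<Rightarrow> 'a set" where
  "GE sb E = (\<lambda>j. sb j ` E)"

text \<open>Shallow embedding of the belief language: a formula denotes a map E |-> [[psi]]_E
 (E is the interpretation of the variable X); all sets are subsets of Omega.
 An optimality notion opt is a predicate opt i S s, e.g. gbr n T ge.\<close>

type_synonym 'w fsem = "'w set \<Rightarrow> 'w set"

definition ratI :: "'w set \<Rightarrow> nat \<Rightarrow> (nat \<Rightarrow> 'w \<Rightarrow> 'a) \<Rightarrow> (nat \<Rightarrow> 'w \<Rightarrow> 'w set)
    \<Rightarrow> (nat \<Rightarrow> (nat \<Rightarrow> 'a set) \<Rightarrow> (nat \<Rightarrow> 'a) \<Rightarrow> bool) \<Rightarrow> nat \<Rightarrow> 'w fsem" where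
  "ratI Om n sb P opt i = (\<lambda>E. {w\<in>Om. opt i (GE sb (P i w)) (sbar n sb w)})"

definition varX :: "'w fsem" where
  "varX = (\<lambda>E. E)"

definition conjF :: "'w fsem \<Rightarrow> 'w fsem \<Rightarrow> 'w fsem" where
  "conjF a b = (\<lambda>E. a E \<inter> b E)"

text \<open>Conjunction over all players i < n (empty conjunction = Omega).\<close>
definition bigconj :: "'w set \<Rightarrow> nat \<Rightarrow> (nat \<Rightarrow> 'w fsem) \<Rightarrow> 'w fsem" where
  "bigconj Om n f = (\<lambda>E. Om \<inter> (\<Inter>i\<in>{..<n}. f i E))"

definition boxI :: "'w set \<Rightarrow> (nat \<Rightarrow> 'w \<Rightarrow> 'w set) \<Rightarrow> nat \<Rightarrow> 'w fsem \<Rightarrow> 'w fsem" where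
  "boxI Om P i psi = (\<lambda>E. {w\<in>Om. P i w \<subseteq> psi E})"

definition OI :: "'w set \<Rightarrow> nat \<Rightarrow> (nat \<Rightarrow> 'w \<Rightarrow> 'a)
    \<Rightarrow> (nat \<Rightarrow> (nat \<Rightarrow> 'a set) \<Rightarrow> (nat \<Rightarrow> 'a) \<Rightarrow> bool) \<Rightarrow> nat \<Rightarrow> 'w fsem \<Rightarrow> 'w fsem" where
  "OI Om n sb opt i psi = (\<lambda>E. {w\<in>Om. opt i (GE sb (psi E)) (sbar n sb w)})"

text \<open>Stages of the transfinite iteration of F |-> h F \<inter> F from Om: the least family
 containing Om, closed under the operator, and closed under intersections of nonempty
 subfamilies (limit stages).\<close>
inductive_set defl_stages :: "'w set \<Rightarrow> ('w set \<Rightarrow> 'w set) \<Rightarrow> 'w set set"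
  for Om :: "'w set" and h :: "'w set \<Rightarrow> 'w set" where
  base: "Om \<in> defl_stages Om h"
| step: "F \<in> defl_stages Om h \<Longrightarrow> h F \<inter> F \<in> defl_stages Om h"
| lim:  "A \<noteq> {} \<Longrightarrow> (\<And>F. F \<in> A \<Longrightarrow> F \<in> defl_stages Om h) \<Longrightarrow> \<Inter>A \<in> defl_stages Om h"

text \<open>The outcome of the (decreasing) iteration is its last stage = intersection of all
 stages.  psi is the denotation E |-> [[psi]]_E with E the interpretation of X, so
 [[nu X. psi]]_E (independent of E, X being bound) is:\<close>
definition nuF :: "'w set \<Rightarrow> 'w fsem \<Rightarrow> 'w fsem" where
  "nuF Om psi = (\<lambda>E. \<Inter>(defl_stages Om psi))"

end

theory Submission
  imports Defs
begin

text \<open>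
  Let R = [[rat_gbr]] and K = [[Box*(rat_gbr)]], the outcome of the deflationary
  iteration of F |-> Box(F \<and> rat_gbr) \<inter> F.  The outcome of such an iteration is itself a
  stage, hence a post-fixed point: K \<subseteq> Box(K \<and> R), i.e. at every world of K each player
  believes only worlds of K \<inter> R.  To show R \<inter> K \<subseteq> [[nu X. O_lsd X]] we use a coinduction
  principle for the iteration: a set X \<subseteq> Omega lies below every stage as soon as X \<subseteq> g F
  for every stage F \<supseteq> X.  For F \<supseteq> R \<inter> K, a world w \<in> R \<inter> K has all beliefs P_i(w) inside F,
  and a globally best response w.r.t. a restriction is locally strictly undominated w.r.t.
  every larger restriction; hence w \<in> [[O_lsd X]]_F.
\<close>

lemma Inter_defl_stages_in: "\<Inter>(defl_stages Om h) \<in> defl_stages Om h"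
  by (rule defl_stages.lim) (auto intro: defl_stages.base)

lemma defl_stages_post_fixed: "\<Inter>(defl_stages Om h) \<subseteq> h (\<Inter>(defl_stages Om h))"
proof -
  let ?K = "\<Inter>(defl_stages Om h)"
  have "h ?K \<inter> ?K \<in> defl_stages Om h"
    using Inter_defl_stages_in by (rule defl_stages.step)
  hence "?K \<subseteq> h ?K \<inter> ?K" by (rule Inter_lower)
  thus ?thesis by blast
qed

text \<open>Coinduction for the iteration: X lies below the outcome if X \<subseteq> Om and the operator
  maps every stage containing X to a set containing X.  No monotonicity of h is needed.\<close>
lemma defl_stages_coinduct:
  assumes "X \<subseteq> Om"
    and "\<And>F. F \<in> defl_stages Om h \<Longrightarrow> X \<subseteq> F \<Longrightarrow> X \<subseteq> h F"
  shows "X \<subseteq> \<Inter>(defl_stages Om h)"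
proof -
  have "X \<subseteq> F" if "F \<in> defl_stages Om h" for F
    using that
  proof induction
    case base
    show ?case using assms(1) .
  next
    case (step F)
    then show ?case using assms(2) by blast
  next
    case (lim A)
    then show ?case by blast
  qed
  thus ?thesis by blast
qed

text \<open>A globally best response relative to a restriction S is locally strictly undominated
  relative to every restriction S' containing S: the witness opponent profile from S also
  lies in S' and beats every alternative, in particular every one in S'.\<close>
lemma gbr_imp_lsd:
  assumes "gbr n T ge i S s"
    and "\<And>j. j < n \<Longrightarrow> S j \<subseteq> S' j"
  shows "lsd n T ge i S' s"
proof -
  obtain z where z: "z \<in> profiles n T" "inC n S z"
    and best: "\<forall>y\<in>profiles n T. ge i (z(i := s i)) (z(i := y i))"
    using assms(1) unfolding gbr_def by blast
  have "inC n S' z" using z(2) assms(2) unfolding inC_def by blast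
  thus ?thesis unfolding lsd_def using z(1) best by blast
qed

lemma GE_mono: "E \<subseteq> F \<Longrightarrow> GE sb E j \<subseteq> GE sb F j"
  unfolding GE_def by blast

lemma bigconj_ratI:
  "bigconj Om n (ratI Om n sb P opt) E = {w\<in>Om. \<forall>i<n. opt i (GE sb (P i w)) (sbar n sb w)}"
  unfolding bigconj_def ratI_def by auto

lemma bigconj_boxI:
  "bigconj Om n (\<lambda>i. boxI Om P i psi) E = {w\<in>Om. \<forall>i<n. P i w \<subseteq> psi E}"
  unfolding bigconj_def boxI_def by auto

lemma bigconj_OI:
  "bigconj Om n (\<lambda>i. OI Om n sb opt i psi) E = {w\<in>Om. \<forall>i<n. opt i (GE sb (psi E)) (sbar n sb w)}"
  unfolding bigconj_def OI_def by auto

theorem mainTheorem4: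
  fixes n :: nat and T :: "nat \<Rightarrow> 'a set"
    and ge :: "nat \<Rightarrow> (nat \<Rightarrow> 'a) \<Rightarrow> (nat \<Rightarrow> 'a) \<Rightarrow> bool"
    and Om :: "'w set" and sb :: "nat \<Rightarrow> 'w \<Rightarrow> 'a" and P :: "nat \<Rightarrow> 'w \<Rightarrow> 'w set"
    and E :: "'w set"
  assumes "strategic_game n T ge"
    and "belief_model n T Om sb P"
  shows "let rat_gbr = bigconj Om n (ratI Om n sb P (gbr n T ge));
             Box = (\<lambda>psi. bigconj Om n (\<lambda>i. boxI Om P i psi));
             O_lsd = (\<lambda>psi. bigconj Om n (\<lambda>i. OI Om n sb (lsd n T ge) i psi))
         in rat_gbr E \<inter> nuF Om (Box (conjF varX rat_gbr)) E
              \<subseteq> nuF Om (O_lsd varX) E"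
proof -
  define rat where "rat = bigconj Om n (ratI Om n sb P (gbr n T ge))"
  define R where "R = {w\<in>Om. \<forall>i<n. gbr n T ge i (GE sb (P i w)) (sbar n sb w)}"
  define box_rat where "box_rat = bigconj Om n (\<lambda>i. boxI Om P i (conjF varX rat))"
  define K where "K = \<Inter>(defl_stages Om box_rat)"
  have rat_R: "rat F = R" for F unfolding rat_def R_def bigconj_ratI ..
  have "K \<subseteq> box_rat K" unfolding K_def by (rule defl_stages_post_fixed)
  hence beliefs: "P i w \<subseteq> K \<inter> R" if "w \<in> K" "i < n" for w i
    using that unfolding box_rat_def bigconj_boxI conjF_def varX_def rat_R by blast
  have "R \<inter> K \<subseteq> \<Inter>(defl_stages Om (bigconj Om n (\<lambda>i. OI Om n sb (lsd n T ge) i varX)))"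
  proof (rule defl_stages_coinduct)
    show "R \<inter> K \<subseteq> Om" unfolding R_def by blast
  next
    fix F assume F: "R \<inter> K \<subseteq> F"
    have "lsd n T ge i (GE sb F) (sbar n sb w)" if w: "w \<in> R \<inter> K" and i: "i < n" for w i
    proof (rule gbr_imp_lsd)
      show "gbr n T ge i (GE sb (P i w)) (sbar n sb w)" using w i unfolding R_def by blast
      have "P i w \<subseteq> F" using beliefs w i F by blast
      thus "GE sb (P i w) j \<subseteq> GE sb F j" for j by (rule GE_mono)
    qed
    thus "R \<inter> K \<subseteq> bigconj Om n (\<lambda>i. OI Om n sb (lsd n T ge) i varX) F"
      unfolding bigconj_OI varX_def R_def by blast
  qed
  thus ?thesis
    unfolding Let_def nuF_def rat_def[symmetric] box_rat_def[symmetric] K_def[symmetric] rat_R .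
qed

end
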